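(* Let $n\ge -1$ and let $C_n$ be the cochain complex described in the context. Define the weight of an admissible monomial $v_0^{k_0}\cdots v_n^{k_n}R^{a_1}\cdots R^{a_m}y_k$ to be $m$. Then the differential does not decrease weight: for any admissible monomial of weight $m$, its differential is a sum of admissible monomials of weight $\ge m$; and if the monomial ends in $y_1$ (i.e. $k=1$), its differential is a sum of admissible monomials of weight exactly $m$.
   Context: Work at the prime $2$. Fix an integer $n\ge -1$. Consider formal monomials $v_0^{k_0}\cdots v_n^{k_n}R^{a_1}\cdots R^{a_m}y_k$ with $k_i\ge 0$, $m\ge 0$, integers $a_i$, and $k\ge 1$. Such a monomial is admissible if $a_i\ge 2a_{i+1}$ for $1\le i<m$ and $a_m\ge 2^{k+1}$ (when $m\ge1$). $C_n$ has $\mathbb{F}_2$-basis the admissible monomials. Gradings: the filtration of a monomial is $s=\sum k_i + m$; its homological degree $h$ is defined by $h(y_k)=2^{k+1}-2$, each $R^a$ adds $a-1$, each $v_i$ subtracts $2^{i+1}-1$; its total degree is $-h-s$. Non-admissible expressions are rewritten in the basis using: $v_iv_j=v_jv_i$; $R^a v_i=\sum_{i<j\le n} v_j R^{a-2^{i+1}+2^{j+1}}$ (so $R^av_n=0$); the Adem relation $R^aR^b=\sum_c\binom{b-1-c}{a-2c}R^{a+b-c}R^c$ for $a<2b$; and instability: $R^c z=0$ whenever $z$ is a monomial with $h(z)\ge c-1$. The differential $d$ is $\mathbb{F}_2$-linear, raises filtration by $1$ and lowers total degree by $1$, and is determined by $dy_k=\sum_{1\le j<k}R^{2^{k+1}-2^{j+1}+1}y_j$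 (so $dy_1=0$), $d(v_ix)=v_i\,dx$, and $d(R^ax)=R^a(dx)+(a+1)\sum_{0\le j\le n}v_jR^{a+2^{j+1}-1}x$, followed by rewriting in the basis. (This is the Koszul complex computing $\mathrm{Ext}_{E(n)R}(QH_*BP,\mathbb{F}_2)$.) *)

theory Defs
  imports Main
begin

text \<open>Koszul complex C_n at the prime 2.  A formal monomial
  v_0^{k_0} ... v_n^{k_n} R^{a_1} ... R^{a_m} y_k is represented by the triple
  (K, [a_1,...,a_m], k) with K i = k_i (and K i = 0 for i > n).
  Elements of C_n (F_2-linear combinations) are represented by lists of
  monomials; the coefficient of a monomial z in a list L is count_list L z mod 2.\<close>

type_synonym mono = "(nat \<Rightarrow> nat) \<times> int list \<times> nat"

definition admissible :: "int \<Rightarrow> mono \<Rightarrow> bool" where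
  "admissible n z = (case z of (K, A, k) \<Rightarrow>
      1 \<le> k \<and> (\<forall>i. n < int i \<longrightarrow> K i = 0)
      \<and> (\<forall>i. Suc i < length A \<longrightarrow> A ! i \<ge> 2 * A ! Suc i)
      \<and> (A \<noteq> [] \<longrightarrow> last A \<ge> 2 ^ (k + 1)))"

definition weight :: "mono \<Rightarrow> nat" where
  "weight z = length (fst (snd z))"

definition hdeg :: "int \<Rightarrow> mono \<Rightarrow> int" where
  "hdeg n z = (case z of (K, A, k) \<Rightarrow>
      (2 ^ (k + 1) - 2) + (\<Sum>a\<leftarrow>A. a - 1)
      - (\<Sum>i<nat (n + 1). int (K i) * (2 ^ (i + 1) - 1)))"

definition vmul :: "nat \<Rightarrow> mono \<Rightarrow> mono" where
  "vmul j z = (case z of (K, A, k) \<Rightarrow> (K(j := Suc (K j)), A, k))"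

definition vmulK :: "(nat \<Rightarrow> nat) \<Rightarrow> mono \<Rightarrow> mono" where
  "vmulK K' z = (case z of (K, A, k) \<Rightarrow> (\<lambda>i. K' i + K i, A, k))"

text \<open>concatenation (= sum in F_2) of partial results; None = out of fuel\<close>
fun concat_opt :: "'a list option list \<Rightarrow> 'a list option" where
  "concat_opt [] = Some []"
| "concat_opt (x # xs) = (case x of None \<Rightarrow> None
      | Some l \<Rightarrow> (case concat_opt xs of None \<Rightarrow> None | Some r \<Rightarrow> Some (l @ r)))"

definition adem_coeff :: "int \<Rightarrow> int \<Rightarrow> int \<Rightarrow> nat" where
  "adem_coeff a b c = (if 0 \<le> a - 2 * c \<and> a - 2 * c \<le> b - 1 - c
      then nat (b - 1 - c) choose nat (a - 2 * c) else 0)"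

text \<open>R^a applied to an admissible monomial, rewritten in the admissible basis
  using instability, the relation R^a v_i = sum_{i<j<=n} v_j R^{a-2^{i+1}+2^{j+1}},
  and the Adem relations.\<close>
fun Rone :: "int \<Rightarrow> nat \<Rightarrow> int \<Rightarrow> mono \<Rightarrow> mono list option" where
  "Rone n 0 a z = None"
| "Rone n (Suc f) a (K, A, k) =
    (if a - 1 \<le> hdeg n (K, A, k) then Some []
     else if (\<exists>i. int i \<le> n \<and> 0 < K i) then
       (let i = (LEAST i. 0 < K i); z' = (K(i := K i - 1), A, k) in
        concat_opt (map (\<lambda>j. map_option (map (vmul j))
                (Rone n f (a - 2 ^ (i + 1) + 2 ^ (j + 1)) z'))
             [Suc i..<nat (n + 1)]))
     else (case A of
             [] \<Rightarrow> Some [(K, [a], k)]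
           | b # A' \<Rightarrow>
               (if 2 * b \<le> a then Some [(K, a # A, k)]
                else concat_opt (map (\<lambda>c.
                   if odd (adem_coeff a b c) then
                     (case Rone n f c (K, A', k) of None \<Rightarrow> None
                      | Some L \<Rightarrow> concat_opt (map (Rone n f (a + b - c)) L))
                   else Some []) [a - b + 1 .. a div 2]))))"

text \<open>differential of (0, A, k) = R^{a_1}...R^{a_m} y_k\<close>
fun dR :: "int \<Rightarrow> nat \<Rightarrow> int list \<Rightarrow> nat \<Rightarrow> mono list option" where
  "dR n f [] k = concat_opt (map (\<lambda>j. Rone n f (2 ^ (k + 1) - 2 ^ (j + 1) + 1) (\<lambda>_. 0, [], j))
                             [1..<k])"
| "dR n f (a # A) k = (case dR n f A k of None \<Rightarrow> None
     | Some L \<Rightarrow> concat_opt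
         [concat_opt (map (Rone n f a) L),
          (if odd (a + 1) then
             concat_opt (map (\<lambda>j. map_option (map (vmul j))
                 (Rone n f (a + 2 ^ (j + 1) - 1) (\<lambda>_. 0, A, k))) [0..<nat (n + 1)])
           else Some [])])"

text \<open>the differential, using d(v_i x) = v_i dx; fuel-bounded (None = fuel exhausted)\<close>
definition dfuel :: "int \<Rightarrow> nat \<Rightarrow> mono \<Rightarrow> mono list option" where
  "dfuel n f z = (case z of (K, A, k) \<Rightarrow> map_option (map (vmulK K)) (dR n f A k))"

definition coeff2 :: "mono list \<Rightarrow> mono \<Rightarrow> bool" where
  "coeff2 L z = odd (count_list L z)"

end

theory Submission
  imports Defs
begin

text \<open>Rewriting R^a z in the admissible basis (by instability, by moving the v's to the left
  and by Adem relations R^a R^b = sum R^(a+b-c) R^c) turns a string of m R's into strings of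
  m + 1 R's: every summand of R^a z has weight one more than z. The differential of
  R^(a_1) ... R^(a_m) y_k is R^(a_1) applied to d (R^(a_2) ... R^(a_m) y_k) plus terms
  v_j R^c R^(a_2) ... R^(a_m) y_k, and d y_k is a sum of terms R^c y_j of weight 1. By induction
  on m every summand of the differential has weight at least m, and exactly m when k = 1,
  because d y_1 = 0. For the fuel-bounded computation one shows in addition that the rewriting
  terminates, so that its result is eventually constant in the fuel.\<close>

lemma concat_opt_eq_Some_iff:
  "concat_opt xs = Some L \<longleftrightarrow> None \<notin> set xs \<and> L = concat (map the xs)"
proof (induction xs arbitrary: L)
  case Nil
  then show ?case by auto
next
  case (Cons x xs)
  then show ?case by (cases x; cases "concat_opt xs") auto
qed

lemma in_concat_opt_mapD:
  assumes "concat_opt (map g xs) = Some L" and "w \<in> set L"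
  obtains x l where "x \<in> set xs" and "g x = Some l" and "w \<in> set l"
proof -
  from assms obtain x where "x \<in> set xs" and "g x \<noteq> None" and "w \<in> set (the (g x))"
    by (force simp: concat_opt_eq_Some_iff)
  then show thesis using that by auto
qed

lemma eventually_concat_opt_map:
  assumes "\<forall>x\<in>set xs. \<exists>l. \<forall>\<^sub>F f in F. g f x = Some l"
  shows "\<exists>L. \<forall>\<^sub>F f in F. concat_opt (map (g f) xs) = Some L"
proof -
  from assms obtain h where "\<forall>x\<in>set xs. \<forall>\<^sub>F f in F. g f x = Some (h x)"
    by (rule bchoice[THEN exE]) blast
  then have "\<forall>\<^sub>F f in F. \<forall>x\<in>set xs. g f x = Some (h x)"
    by (simp add: eventually_ball_finite)
  then have "\<forall>\<^sub>F f in F. concat_opt (map (g f) xs) = Some (concat (map h xs))"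
    by eventually_elim (auto simp: concat_opt_eq_Some_iff intro!: arg_cong[where f = concat])
  then show ?thesis ..
qed

lemma admissible_Cons_tail:
  assumes "admissible n (K, b # A, k)"
  shows "admissible n (K, A, k)"
proof -
  have "A ! i \<ge> 2 * A ! Suc i" if "Suc i < length A" for i
    using assms that unfolding admissible_def by (fastforce dest: spec[of _ "Suc i"])
  then show ?thesis
    using assms by (auto simp: admissible_def)
qed

lemma admissible_Cons:
  assumes "admissible n (K, b # A, k)" and "2 * b \<le> a"
  shows "admissible n (K, a # b # A, k)"
proof -
  have "(a # b # A) ! i \<ge> 2 * (a # b # A) ! Suc i" if "Suc i < length (a # b # A)" for i
    using assms that unfolding admissible_def by (cases i) auto
  then show ?thesis
    using assms by (auto simp: admissible_def)
qed

lemma admissible_le_entries: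
  "admissible n (K, A, k) \<Longrightarrow> x \<in> set A \<Longrightarrow> 2 ^ (k + 1) \<le> x"
proof (induction A arbitrary: x)
  case Nil
  then show ?case by simp
next
  case (Cons b A)
  have IH: "\<And>x. x \<in> set A \<Longrightarrow> 2 ^ (k + 1) \<le> x"
    using Cons.IH admissible_Cons_tail[OF Cons.prems(1)] by blast
  have "2 ^ (k + 1) \<le> b"
  proof (cases A)
    case Nil
    then show ?thesis using Cons.prems(1) by (simp add: admissible_def)
  next
    case (Cons b' A')
    then have "2 * b' \<le> b" and "2 ^ (k + 1) \<le> b'"
      using Cons.prems(1) IH unfolding admissible_def by fastforce+
    then show ?thesis using zero_less_power[of "2::int" "k + 1"] by linarith
  qed
  then show ?case using IH Cons.prems(2) by auto
qed

text \<open>The monomials that can occur when R^a z is rewritten in the admissible basis, one rule for each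
  branch of Rone that produces terms. This over-approximates the expansion: Adem coefficients
  and cancellation
  in F_2 are ignored.\<close>

inductive R_summand :: "int \<Rightarrow> int \<Rightarrow> mono \<Rightarrow> mono \<Rightarrow> bool" for n where
  R_v: "0 < K i \<Longrightarrow> int i \<le> n \<Longrightarrow> int j \<le> n \<Longrightarrow>
    R_summand n (a - 2 ^ (i + 1) + 2 ^ (j + 1)) (K(i := K i - 1), A, k) w \<Longrightarrow>
    R_summand n a (K, A, k) (vmul j w)"
| R_y: "2 ^ (k + 1) \<le> a \<Longrightarrow> R_summand n a (K, [], k) (K, [a], k)"
| R_admissible: "2 * b \<le> a \<Longrightarrow> R_summand n a (K, b # A, k) (K, a # b # A, k)"
| R_Adem: "R_summand n c (K, A, k) u \<Longrightarrow> R_summand n (a + b - c) u w \<Longrightarrow>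
    R_summand n a (K, b # A, k) w"

lemma R_summand_admissible:
  "R_summand n a z w \<Longrightarrow> admissible n z \<Longrightarrow> admissible n w \<and> weight w = Suc (weight z)"
proof (induction rule: R_summand.induct)
  case (R_v K i j a A k w)
  then have "admissible n (K(i := K i - 1), A, k)"
    by (simp add: admissible_def)
  with R_v show ?case
    by (simp add: admissible_def vmul_def weight_def split: prod.splits)
next
  case (R_y k a K)
  then show ?case by (simp add: admissible_def weight_def)
next
  case (R_admissible b a K A k)
  then show ?case by (simp add: admissible_Cons weight_def)
next
  case (R_Adem c K A k u a b w)
  then show ?case by (simp add: admissible_Cons_tail weight_def)
qed

lemma R_summand_v_free:
  "R_summand n a z w \<Longrightarrow> \<forall>i. int i \<le> n \<longrightarrow> fst z i = 0 \<Longrightarrow>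
    fst w = fst z \<and> snd (snd w) = snd (snd z) \<and> sum_list (fst (snd w)) = a + sum_list (fst (snd z))"
  by (induction rule: R_summand.induct) auto

lemma least_v_index:
  assumes "\<exists>i. int i \<le> n \<and> 0 < K i"
  shows "0 < K (LEAST i. 0 < K i)" and "int (LEAST i. 0 < K i) \<le> n"
proof -
  from assms obtain i0 where "int i0 \<le> n" and "0 < K i0" by blast
  then show "0 < K (LEAST i. 0 < K i)" and "int (LEAST i. 0 < K i) \<le> n"
    using Least_le[of "\<lambda>i. 0 < K i" i0] by (auto intro: LeastI)
qed

lemma Rone_Suc_unstable:
  "a - 1 \<le> hdeg n (K, A, k) \<Longrightarrow> Rone n (Suc f) a (K, A, k) = Some []"
  by simp

lemma Rone_Suc_v:
  assumes "\<not> a - 1 \<le> hdeg n (K, A, k)" and "\<exists>i. int i \<le> n \<and> 0 < K i"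
    and "i = (LEAST i. 0 < K i)"
  shows "Rone n (Suc f) a (K, A, k) = concat_opt (map (\<lambda>j. map_option (map (vmul j))
    (Rone n f (a - 2 ^ (i + 1) + 2 ^ (j + 1)) (K(i := K i - 1), A, k))) [Suc i..<nat (n + 1)])"
  using assms by (simp only: Rone.simps if_False if_True Let_def)

lemma Rone_Suc_y:
  assumes "\<not> a - 1 \<le> hdeg n (K, [], k)" and "\<forall>i. int i \<le> n \<longrightarrow> K i = 0"
  shows "Rone n (Suc f) a (K, [], k) = Some [(K, [a], k)]"
proof -
  have "\<not> (\<exists>i. int i \<le> n \<and> 0 < K i)"
    using assms(2) by auto
  with assms show ?thesis
    by (simp only: Rone.simps if_False if_True list.case)
qed

lemma Rone_Suc_admissible:
  assumes "\<not> a - 1 \<le> hdeg n (K, b # A, k)" and "\<forall>i. int i \<le> n \<longrightarrow> K i = 0" and "2 * b \<le> a"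
  shows "Rone n (Suc f) a (K, b # A, k) = Some [(K, a # b # A, k)]"
proof -
  have "\<not> (\<exists>i. int i \<le> n \<and> 0 < K i)"
    using assms(2) by auto
  with assms show ?thesis
    by (simp only: Rone.simps if_False if_True list.case)
qed

lemma Rone_Suc_Adem:
  assumes "\<not> a - 1 \<le> hdeg n (K, b # A, k)" and "\<forall>i. int i \<le> n \<longrightarrow> K i = 0" and "\<not> 2 * b \<le> a"
  shows "Rone n (Suc f) a (K, b # A, k) = concat_opt (map (\<lambda>c. if odd (adem_coeff a b c) then
      (case Rone n f c (K, A, k) of None \<Rightarrow> None
        | Some L \<Rightarrow> concat_opt (map (Rone n f (a + b - c)) L))
    else Some []) [a - b + 1 .. a div 2])"
proof -
  have "\<not> (\<exists>i. int i \<le> n \<and> 0 < K i)"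
    using assms(2) by auto
  with assms(1,3) show ?thesis
    by (simp only: Rone.simps if_False list.case)
qed

lemma Rone_summand:
  "Rone n f a z = Some L \<Longrightarrow> w \<in> set L \<Longrightarrow> R_summand n a z w"
proof (induction f arbitrary: a z L w)
  case 0
  then show ?case by simp
next
  case (Suc f)
  obtain K A k where z: "z = (K, A, k)"
    by (cases z)
  have Some: "Rone n (Suc f) a (K, A, k) = Some L" and w: "w \<in> set L"
    using Suc.prems z by simp_all
  have stable: "\<not> a - 1 \<le> hdeg n (K, A, k)"
    using Some w Rone_Suc_unstable by fastforce
  have "R_summand n a (K, A, k) w"
  proof (cases "\<exists>i. int i \<le> n \<and> 0 < K i")
    case v: True
    define i where "i = (LEAST i. 0 < K i)"
    obtain j l where "j \<in> set [Suc i..<nat (n + 1)]" and "w \<in> vmul j ` set l"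
      and "Rone n f (a - 2 ^ (i + 1) + 2 ^ (j + 1)) (K(i := K i - 1), A, k) = Some l"
      using Some w unfolding Rone_Suc_v[OF stable v i_def] by (auto elim!: in_concat_opt_mapD)
    with least_v_index[OF v, folded i_def] Suc.IH show ?thesis
      by (auto intro: R_v)
  next
    case False
    then have v_free: "\<forall>i. int i \<le> n \<longrightarrow> K i = 0"
      by auto
    show ?thesis
    proof (cases A)
      case Nil
      with stable v_free have "2 ^ (k + 1) \<le> a"
        by (simp add: hdeg_def)
      moreover have "L = [(K, [a], k)]"
        using Some Rone_Suc_y[OF stable[unfolded Nil] v_free] Nil by simp
      ultimately show ?thesis
        using w Nil by (auto intro: R_y)
    next
      case (Cons b A')
      show ?thesis
      proof (cases "2 * b \<le> a")
        case True
        then show ?thesis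
          using Some w Rone_Suc_admissible[OF stable[unfolded Cons] v_free True] Cons
          by (auto intro: R_admissible)
      next
        case False
        obtain c L1 u l where "Rone n f c (K, A', k) = Some L1" and "u \<in> set L1"
          and "Rone n f (a + b - c) u = Some l" and "w \<in> set l"
          using Some w unfolding Cons Rone_Suc_Adem[OF stable[unfolded Cons] v_free False]
          by (auto elim!: in_concat_opt_mapD split: if_splits option.splits)
        with Suc.IH show ?thesis
          unfolding Cons by (blast intro: R_Adem)
      qed
    qed
  qed
  then show ?case
    using z by simp
qed

text \<open>Every recursive call of Rone removes a v or shortens the R-string, except the outer call
  R^(a+b-c) in an Adem relation R^a R^b = sum R^(a+b-c) R^c; there c < b, so v's and length are
  kept but the sum of the R-indices drops.\<close>

definition rewrite_measure :: "int \<Rightarrow> (mono \<times> mono) set" where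
  "rewrite_measure n = measures [\<lambda>z. \<Sum>i<nat (n + 1). fst z i,
      \<lambda>z. length (fst (snd z)), \<lambda>z. nat (sum_list (fst (snd z)))]"

lemma wf_rewrite_measure: "wf (rewrite_measure n)"
  by (simp add: rewrite_measure_def)

lemma Adem_summand_decreases:
  assumes "admissible n (K, b # A, k)" and "\<forall>i. int i \<le> n \<longrightarrow> K i = 0" and "c < b"
    and "R_summand n c (K, A, k) u"
  shows "(u, (K, b # A, k)) \<in> rewrite_measure n"
proof -
  obtain Au where u: "u = (K, Au, k)" and sum_Au: "sum_list Au = c + sum_list A"
    using R_summand_v_free[OF assms(4)] assms(2) by (cases u) auto
  have "admissible n u" and length_Au: "length Au = Suc (length A)"
    using R_summand_admissible[OF assms(4) admissible_Cons_tail[OF assms(1)]] u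
    by (auto simp: weight_def)
  have "0 \<le> x" if "x \<in> set Au" for x
  proof -
    have "2 ^ (k + 1) \<le> x"
      using admissible_le_entries \<open>admissible n u\<close> that unfolding u by blast
    then show ?thesis
      by (rule order_trans[rotated]) simp
  qed
  then have "0 \<le> sum_list Au"
    by (rule sum_list_nonneg)
  with sum_Au assms(3) have "nat (sum_list Au) < nat (sum_list (b # A))"
    by simp
  then show ?thesis
    unfolding rewrite_measure_def u by (simp add: in_measures length_Au)
qed

lemma lowest_v_stabilizes:
  assumes "admissible n (K, A, k)" and "0 < K i" and "int i \<le> n"
    and IH: "\<And>z a. (z, (K, A, k)) \<in> rewrite_measure n \<Longrightarrow> admissible n z \<Longrightarrow>
      \<exists>L. \<forall>\<^sub>F f in sequentially. Rone n f a z = Some L"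
  shows "\<exists>L. \<forall>\<^sub>F f in sequentially. concat_opt (map (\<lambda>j. map_option (map (vmul j))
    (Rone n f (a - 2 ^ (i + 1) + 2 ^ (j + 1)) (K(i := K i - 1), A, k))) js) = Some L"
proof (rule eventually_concat_opt_map, intro ballI)
  fix j
  have "(\<Sum>j<nat (n + 1). (K(i := K i - 1)) j) < (\<Sum>j<nat (n + 1). K j)"
    by (rule sum_strict_mono_ex1) (use assms(2,3) in auto)
  then have "((K(i := K i - 1), A, k), (K, A, k)) \<in> rewrite_measure n"
    unfolding rewrite_measure_def by (simp add: measures_less)
  moreover have "admissible n (K(i := K i - 1), A, k)"
    using assms(1) by (simp add: admissible_def)
  ultimately obtain L where
    "\<forall>\<^sub>F f in sequentially. Rone n f (a - 2 ^ (i + 1) + 2 ^ (j + 1)) (K(i := K i - 1), A, k) = Some L"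
    using IH by blast
  then have "\<forall>\<^sub>F f in sequentially. map_option (map (vmul j))
      (Rone n f (a - 2 ^ (i + 1) + 2 ^ (j + 1)) (K(i := K i - 1), A, k)) = Some (map (vmul j) L)"
    by eventually_elim simp
  then show "\<exists>l. \<forall>\<^sub>F f in sequentially. map_option (map (vmul j))
      (Rone n f (a - 2 ^ (i + 1) + 2 ^ (j + 1)) (K(i := K i - 1), A, k)) = Some l" ..
qed

lemma Adem_stabilizes:
  assumes "admissible n (K, b # A, k)" and "\<forall>i. int i \<le> n \<longrightarrow> K i = 0" and "\<forall>c\<in>set cs. c < b"
    and IH: "\<And>z a. (z, (K, b # A, k)) \<in> rewrite_measure n \<Longrightarrow> admissible n z \<Longrightarrow>
      \<exists>L. \<forall>\<^sub>F f in sequentially. Rone n f a z = Some L"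
  shows "\<exists>L. \<forall>\<^sub>F f in sequentially. concat_opt (map (\<lambda>c. if odd (adem_coeff a b c) then
      (case Rone n f c (K, A, k) of None \<Rightarrow> None
        | Some L \<Rightarrow> concat_opt (map (Rone n f (a + b - c)) L))
    else Some []) cs) = Some L"
proof (rule eventually_concat_opt_map, intro ballI)
  fix c assume "c \<in> set cs"
  have tail: "admissible n (K, A, k)"
    using assms(1) by (rule admissible_Cons_tail)
  moreover have "((K, A, k), (K, b # A, k)) \<in> rewrite_measure n"
    by (simp add: rewrite_measure_def in_measures)
  ultimately obtain L1 where L1: "\<forall>\<^sub>F f in sequentially. Rone n f c (K, A, k) = Some L1"
    using IH by blast
  then obtain f1 where "Rone n f1 c (K, A, k) = Some L1"
    by (auto simp: eventually_sequentially)
  then have summand: "R_summand n c (K, A, k) u" if "u \<in> set L1" for u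
    using that by (rule Rone_summand)
  have "c < b"
    using assms(3) \<open>c \<in> set cs\<close> by blast
  then have "\<forall>u\<in>set L1. \<exists>l. \<forall>\<^sub>F f in sequentially. Rone n f (a + b - c) u = Some l"
    using IH Adem_summand_decreases[OF assms(1,2) _ summand] R_summand_admissible[OF summand tail]
    by blast
  then obtain L2 where "\<forall>\<^sub>F f in sequentially. concat_opt (map (Rone n f (a + b - c)) L1) = Some L2"
    by (rule eventually_concat_opt_map[THEN exE])
  with L1 have "\<forall>\<^sub>F f in sequentially. (if odd (adem_coeff a b c) then
      (case Rone n f c (K, A, k) of None \<Rightarrow> None
        | Some L \<Rightarrow> concat_opt (map (Rone n f (a + b - c)) L))
    else Some []) = Some (if odd (adem_coeff a b c) then L2 else [])"
    by eventually_elim simp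
  then show "\<exists>l. \<forall>\<^sub>F f in sequentially. (if odd (adem_coeff a b c) then
      (case Rone n f c (K, A, k) of None \<Rightarrow> None
        | Some L \<Rightarrow> concat_opt (map (Rone n f (a + b - c)) L))
    else Some []) = Some l" ..
qed

lemma Rone_stabilizes:
  "admissible n z \<Longrightarrow> \<exists>L. \<forall>\<^sub>F f in sequentially. Rone n f a z = Some L"
proof (induction z arbitrary: a rule: wf_induct[OF wf_rewrite_measure[of n]])
  case (1 z)
  obtain K A k where z: "z = (K, A, k)"
    by (cases z)
  have adm: "admissible n (K, A, k)"
    using "1.prems" z by simp
  have IH: "\<And>z' a. (z', (K, A, k)) \<in> rewrite_measure n \<Longrightarrow> admissible n z' \<Longrightarrow>
      \<exists>L. \<forall>\<^sub>F f in sequentially. Rone n f a z' = Some L"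
    using "1.IH" z by blast
  have "\<exists>L. \<forall>\<^sub>F f in sequentially. Rone n (Suc f) a (K, A, k) = Some L"
  proof (cases "a - 1 \<le> hdeg n (K, A, k)")
    case True
    then show ?thesis
      by simp
  next
    case stable: False
    show ?thesis
    proof (cases "\<exists>i. int i \<le> n \<and> 0 < K i")
      case v: True
      from lowest_v_stabilizes[OF adm least_v_index[OF v] IH] show ?thesis
        unfolding Rone_Suc_v[OF stable v refl] .
    next
      case False
      then have v_free: "\<forall>i. int i \<le> n \<longrightarrow> K i = 0"
        by auto
      show ?thesis
      proof (cases A)
        case Nil
        then show ?thesis
          using Rone_Suc_y[OF stable[unfolded Nil] v_free] by simp
      next
        case (Cons b A')
        show ?thesis
        proof (cases "2 * b \<le> a")
          case True
          then show ?thesis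
            using Rone_Suc_admissible[OF stable[unfolded Cons] v_free True] Cons by simp
        next
          case False
          then have "\<forall>c\<in>set [a - b + 1 .. a div 2]. c < b"
            by auto
          from Adem_stabilizes[OF adm[unfolded Cons] v_free this IH[unfolded Cons]] show ?thesis
            unfolding Cons Rone_Suc_Adem[OF stable[unfolded Cons] v_free False] .
        qed
      qed
    qed
  qed
  then obtain L where "\<forall>\<^sub>F f in sequentially. Rone n (Suc f) a (K, A, k) = Some L" ..
  then have "\<forall>\<^sub>F f in sequentially. Rone n f a z = Some L"
    unfolding z eventually_sequentially_Suc[of "\<lambda>f. Rone n f a (K, A, k) = Some L", symmetric] .
  then show ?case ..
qed

lemma dR_summand:
  assumes "dR n f A k = Some L" and "admissible n (\<lambda>_. 0, A, k)" and "w \<in> set L"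
  shows "admissible n w \<and> length A \<le> weight w \<and> (k = 1 \<longrightarrow> weight w = length A)"
  using assms
proof (induction A arbitrary: L w)
  case Nil
  then obtain j l where j: "j \<in> set [1..<k]"
    and "Rone n f (2 ^ (k + 1) - 2 ^ (j + 1) + 1) (\<lambda>_. 0, [], j) = Some l" and "w \<in> set l"
    by (auto elim!: in_concat_opt_mapD)
  moreover have "admissible n (\<lambda>_. 0, [], j)"
    using j by (simp add: admissible_def)
  ultimately show ?case
    using j R_summand_admissible[OF Rone_summand] by (auto simp: weight_def)
next
  case (Cons a A)
  have tail: "admissible n (\<lambda>_. 0, A, k)"
    using Cons.prems(2) by (rule admissible_Cons_tail)
  from Cons.prems(1) obtain L0 l1 l2 where L0: "dR n f A k = Some L0"
    and l1: "concat_opt (map (Rone n f a) L0) = Some l1"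
    and l2: "(if odd (a + 1) then concat_opt (map (\<lambda>j. map_option (map (vmul j))
        (Rone n f (a + 2 ^ (j + 1) - 1) (\<lambda>_. 0, A, k))) [0..<nat (n + 1)]) else Some []) = Some l2"
    and "L = l1 @ l2"
    by (auto split: option.splits)
  with Cons.prems(3) consider "w \<in> set l1" | "w \<in> set l2"
    by auto
  then show ?case
  proof cases
    case 1
    with l1 obtain u l where "u \<in> set L0" and "Rone n f a u = Some l" and "w \<in> set l"
      by (auto elim!: in_concat_opt_mapD)
    with Cons.IH[OF L0 tail] R_summand_admissible[OF Rone_summand] show ?thesis
      by fastforce
  next
    case 2
    with l2 obtain j l where "j \<in> set [0..<nat (n + 1)]"
      and "Rone n f (a + 2 ^ (j + 1) - 1) (\<lambda>_. 0, A, k) = Some l" and "w \<in> vmul j ` set l"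
      by (auto elim!: in_concat_opt_mapD split: if_splits)
    with tail R_summand_admissible[OF Rone_summand] show ?thesis
      by (auto simp: admissible_def vmul_def weight_def split: prod.splits)
  qed
qed

lemma dR_stabilizes:
  "admissible n (\<lambda>_. 0, A, k) \<Longrightarrow> \<exists>L. \<forall>\<^sub>F f in sequentially. dR n f A k = Some L"
proof (induction A)
  case Nil
  have "\<forall>j\<in>set [1..<k]. \<exists>l. \<forall>\<^sub>F f in sequentially.
      Rone n f (2 ^ (k + 1) - 2 ^ (j + 1) + 1) (\<lambda>_. 0, [], j) = Some l"
    by (auto intro!: Rone_stabilizes simp: admissible_def)
  then show ?case
    unfolding dR.simps by (rule eventually_concat_opt_map)
next
  case (Cons a A)
  have tail: "admissible n (\<lambda>_. 0, A, k)"
    using Cons.prems by (rule admissible_Cons_tail)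
  then obtain L0 where L0: "\<forall>\<^sub>F f in sequentially. dR n f A k = Some L0"
    using Cons.IH by blast
  then obtain f0 where "dR n f0 A k = Some L0"
    by (auto simp: eventually_sequentially)
  then have "\<forall>u\<in>set L0. \<exists>l. \<forall>\<^sub>F f in sequentially. Rone n f a u = Some l"
    using dR_summand tail Rone_stabilizes by blast
  then obtain L1 where L1: "\<forall>\<^sub>F f in sequentially. concat_opt (map (Rone n f a) L0) = Some L1"
    by (rule eventually_concat_opt_map[THEN exE])
  have "\<forall>j\<in>set [0..<nat (n + 1)]. \<exists>l. \<forall>\<^sub>F f in sequentially.
      map_option (map (vmul j)) (Rone n f (a + 2 ^ (j + 1) - 1) (\<lambda>_. 0, A, k)) = Some l"
    using Rone_stabilizes[OF tail] by (fastforce elim: eventually_mono)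
  then obtain L2 where L2: "\<forall>\<^sub>F f in sequentially. concat_opt (map (\<lambda>j. map_option (map (vmul j))
      (Rone n f (a + 2 ^ (j + 1) - 1) (\<lambda>_. 0, A, k))) [0..<nat (n + 1)]) = Some L2"
    by (rule eventually_concat_opt_map[THEN exE])
  from L0 L1 L2 have "\<forall>\<^sub>F f in sequentially.
      dR n f (a # A) k = Some (L1 @ (if odd (a + 1) then L2 else []))"
    by eventually_elim simp
  then show ?case ..
qed

lemma dfuel_summand:
  assumes "dfuel n f (K, A, k) = Some L" and "admissible n (K, A, k)" and "z \<in> set L"
  shows "admissible n z \<and> length A \<le> weight z \<and> (k = 1 \<longrightarrow> weight z = length A)"
proof -
  from assms(1,3) obtain L0 w where L0: "dR n f A k = Some L0" and w: "w \<in> set L0"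
    and z: "z = vmulK K w"
    by (auto simp: dfuel_def)
  have "admissible n (\<lambda>_. 0, A, k)"
    using assms(2) by (simp add: admissible_def)
  with L0 w have "admissible n w \<and> length A \<le> weight w \<and> (k = 1 \<longrightarrow> weight w = length A)"
    by (intro dR_summand)
  with assms(2) show ?thesis
    unfolding z by (auto simp: admissible_def vmulK_def weight_def split: prod.splits)
qed

theorem mainTheorem5:
  fixes n :: int and K :: "nat \<Rightarrow> nat" and A :: "int list" and k :: nat
  assumes "n \<ge> -1"
    and "admissible n (K, A, k)"
  shows "(\<exists>f. dfuel n f (K, A, k) \<noteq> None)
    \<and> (\<forall>f L. dfuel n f (K, A, k) = Some L \<longrightarrow>
          (\<forall>z. coeff2 L z \<longrightarrow> admissible n z \<and> weight z \<ge> length A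
                \<and> (k = 1 \<longrightarrow> weight z = length A)))"
proof -
  have "admissible n (\<lambda>_. 0, A, k)"
    using assms(2) by (simp add: admissible_def)
  then obtain L where "\<forall>\<^sub>F f in sequentially. dR n f A k = Some L"
    using dR_stabilizes by blast
  then have "\<exists>f. dfuel n f (K, A, k) \<noteq> None"
    by (auto simp: dfuel_def eventually_sequentially)
  moreover have "z \<in> set L" if "coeff2 L z" for L z
    using that count_list_0_iff[of L z] by (auto simp: coeff2_def)
  ultimately show ?thesis
    using dfuel_summand assms(2) by blast
qed

end
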